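(* Let $L=\mathbb Z\alpha_1\oplus\mathbb Z\alpha_2\oplus\mathbb Z\alpha_3$ with $\langle\alpha_i,\alpha_j\rangle=2\delta_{ij}$, let $N=\sum_{i,j=1}^3\mathbb Z(\alpha_i\pm\alpha_j)$ (a sublattice isometric to $\sqrt2A_3$), and let $V_N\subset V_L$ be the corresponding lattice vertex operator (sub)algebras. Let $\tau=\sigma\otimes\sigma\otimes\sigma$ be the automorphism of $V_L=V_{\mathbb Z\alpha_1}\otimes V_{\mathbb Z\alpha_2}\otimes V_{\mathbb Z\alpha_3}$ described in the context, and let $V_L^+$ be the fixed point subalgebra of the automorphism $\psi_2$ of $V_L$ induced by the isometry $\beta\mapsto-\beta$ of $L$. Then $\tau(V_N)=V_L^+$.
   Context: For a positive definite even lattice $L$ in which all inner products are even, $V_L=M(1)\otimes\mathbb C[L]$ is the lattice vertex operator algebra (with trivial cocycle), where $\mathfrak h=\mathbb C\otimes_{\mathbb Z}L$, $M(1)=\mathbb C[h(n)\mid h\in\mathfrak h, n<0]$ is the Heisenberg Fock space, and $e^\beta$ ($\beta\in L$) denotes the basis element of the group algebra. Vertex operators: $Y(h(-1),z)=\sum_n h(n)z^{-n-1}$ with $h(0)e^\gamma=\langle h,\gamma\rangle e^\gamma$, and $Y(e^\beta,z)=\exp(\sum_{n<0}\frac{\beta(n)}{-n}z^{-n})\exp(\sum_{n>0}\frac{\beta(n)}{-n}z^{-n})e_\beta z^{\beta}$, where $e_\beta(u\otimes e^\gamma)=u\otimes e^{\beta+\gamma}$ and $z^\beta(u\otimes e^\gamma)=z^{\langle\beta,\gamma\rangle}u\otimes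 e^\gamma$. For a sublattice $N\subset L$, $V_N=M(1)_N\otimes\mathbb C[N]$ is naturally a vertex subalgebra of $V_L$ (with different Virasoro element in general). For $\langle\alpha,\alpha\rangle=2$, the weight-one space of $V_{\mathbb Z\alpha}$ is a Lie algebra $\cong sl_2(\mathbb C)$ with bracket $[u,v]=u_0v$ and basis $\alpha(-1),e^{\alpha},e^{-\alpha}$, and $V_{\mathbb Z\alpha}$ is generated by it. $\sigma$ denotes the (unique) vertex operator algebra automorphism of $V_{\mathbb Z\alpha}$ whose restriction to the weight-one space is $\alpha(-1)\mapsto e^\alpha+e^{-\alpha}$, $e^\alpha+e^{-\alpha}\mapsto\alpha(-1)$, $e^\alpha-e^{-\alpha}\mapsto-(e^\alpha-e^{-\alpha})$. The automorphism $\psi_2$ acts by $u\otimes e^\beta\mapsto \theta(u)\otimes e^{-\beta}$, where $\theta$ is the automorphism of $M(1)$ induced by $h(n)\mapsto -h(n)$; $V_L^{\pm}$ denote its $\pm1$ eigenspaces. *)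

theory Defs
  imports Complex_Main "HOL-Library.Poly_Mapping"
begin

text \<open>Concrete model of the lattice VOA V_L for L = Z a1 + Z a2 + Z a3, <ai,aj> = 2 delta_ij,
  with trivial cocycle.  Basis of V_L = M(1) tensor C[L]: pairs (mon, gamma) where mon is a
  monomial in the Heisenberg variables a_i(-(r+1)) (the key (i,r) stands for a_i(-(r+1)))
  and gamma in L is written in coordinates w.r.t. a1,a2,a3.\<close>

datatype ix = I1 | I2 | I3

type_synonym mon = "(ix \<times> nat) \<Rightarrow>\<^sub>0 nat"
type_synonym lat = "ix \<Rightarrow> int"
type_synonym vec = "mon \<times> lat \<Rightarrow> complex"

definition ip :: "lat \<Rightarrow> lat \<Rightarrow> int" where
  "ip \<beta> \<gamma> = 2 * (\<beta> I1 * \<gamma> I1 + \<beta> I2 * \<gamma> I2 + \<beta> I3 * \<gamma> I3)"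

definition latadd :: "lat \<Rightarrow> lat \<Rightarrow> lat" where
  "latadd \<beta> \<gamma> = (\<lambda>i. \<beta> i + \<gamma> i)"

definition unitv :: "ix \<Rightarrow> lat" where
  "unitv i = (\<lambda>j. if j = i then 1 else 0)"

definition supp :: "vec \<Rightarrow> (mon \<times> lat) set" where
  "supp v = {b. v b \<noteq> 0}"

definition VL :: "vec set" where
  "VL = {v. finite (supp v)}"

definition basis :: "mon \<times> lat \<Rightarrow> vec" where
  "basis b = (\<lambda>x. if x = b then 1 else 0)"

definition vscale :: "complex \<Rightarrow> vec \<Rightarrow> vec" where
  "vscale c v = (\<lambda>x. c * v x)"

definition vadd :: "vec \<Rightarrow> vec \<Rightarrow> vec" where
  "vadd u v = (\<lambda>x. u x + v x)"

definition ext :: "(mon \<times> lat \<Rightarrow> vec) \<Rightarrow> vec \<Rightarrow> vec" where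
  "ext f v = (\<lambda>x. \<Sum>b\<in>supp v. v b * f b x)"

definition vacuum :: vec where
  "vacuum = basis (0, (\<lambda>_. 0))"

definition heis_b :: "ix \<Rightarrow> int \<Rightarrow> mon \<times> lat \<Rightarrow> vec" where
  "heis_b i n b = (case b of (m, \<gamma>) \<Rightarrow>
     if n < 0 then basis (m + Poly_Mapping.single (i, nat (- n - 1)) 1, \<gamma>)
     else if n = 0 then vscale (of_int (2 * \<gamma> i)) (basis (m, \<gamma>))
     else vscale (of_int (2 * n) * of_nat (Poly_Mapping.lookup m (i, nat (n - 1))))
                 (basis (m - Poly_Mapping.single (i, nat (n - 1)) 1, \<gamma>)))"

definition heis :: "ix \<Rightarrow> int \<Rightarrow> vec \<Rightarrow> vec" where
  "heis i n = ext (heis_b i n)"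

definition heisL :: "lat \<Rightarrow> int \<Rightarrow> vec \<Rightarrow> vec" where
  "heisL \<beta> n v = (\<lambda>x. of_int (\<beta> I1) * heis I1 n v x + of_int (\<beta> I2) * heis I2 n v x
                      + of_int (\<beta> I3) * heis I3 n v x)"

text \<open>Coefficients of z^k in exp(sum_{n>0} beta(-n) z^n / n) and of z^(-k) in
  exp(sum_{n>0} beta(n) z^(-n) / (-n)), via k S_k = sum_{n=1}^k x_n S_(k-n).\<close>
fun Sminus :: "lat \<Rightarrow> nat \<Rightarrow> vec \<Rightarrow> vec" where
  "Sminus \<beta> k v = (if k = 0 then v else
     (\<lambda>x. (1 / of_nat k) * (\<Sum>n\<in>{1..k}. heisL \<beta> (- int n) (Sminus \<beta> (k - n) v) x)))"

fun Tplus :: "lat \<Rightarrow> nat \<Rightarrow> vec \<Rightarrow> vec" where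
  "Tplus \<beta> k v = (if k = 0 then v else
     (\<lambda>x. (1 / of_nat k) * (\<Sum>n\<in>{1..k}. - heisL \<beta> (int n) (Tplus \<beta> (k - n) v) x)))"

text \<open>Weight of a monomial (Tplus beta k kills it for k > weight).\<close>
definition wt :: "mon \<Rightarrow> nat" where
  "wt m = (\<Sum>p\<in>Poly_Mapping.keys m. (snd p + 1) * Poly_Mapping.lookup m p)"

definition deg :: "mon \<Rightarrow> nat" where
  "deg m = (\<Sum>p\<in>Poly_Mapping.keys m. Poly_Mapping.lookup m p)"

text \<open>Modes (e^beta)_n: coefficient of z^(-n-1) in
  Y(e^beta,z) = E^-(-beta,z) E^+(-beta,z) e_beta z^beta.\<close>
definition vop_b :: "lat \<Rightarrow> int \<Rightarrow> mon \<times> lat \<Rightarrow> vec" where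
  "vop_b \<beta> n b = (case b of (m, \<gamma>) \<Rightarrow>
     (\<lambda>x. \<Sum>k\<in>{0..wt m}.
        (let j = int k - n - 1 - ip \<beta> \<gamma> in
         if 0 \<le> j then Sminus \<beta> (nat j) (Tplus \<beta> k (basis (m, latadd \<beta> \<gamma>))) x else 0)))"

definition vop :: "lat \<Rightarrow> int \<Rightarrow> vec \<Rightarrow> vec" where
  "vop \<beta> n = ext (vop_b \<beta> n)"

text \<open>The automorphism psi_2: u tensor e^beta |-> theta(u) tensor e^(-beta).\<close>
definition psi2 :: "vec \<Rightarrow> vec" where
  "psi2 = ext (\<lambda>(m, \<gamma>). vscale ((-1) ^ deg m) (basis (m, (\<lambda>i. - \<gamma> i))))"

definition VLplus :: "vec set" where
  "VLplus = {v \<in> VL. psi2 v = v}"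

inductive_set Nlat :: "lat set" where
  zero: "(\<lambda>_. 0) \<in> Nlat"
| addp: "\<gamma> \<in> Nlat \<Longrightarrow> latadd \<gamma> (latadd (unitv i) (unitv j)) \<in> Nlat"
| subp: "\<gamma> \<in> Nlat \<Longrightarrow> latadd \<gamma> (\<lambda>k. - (unitv i k + unitv j k)) \<in> Nlat"
| addm: "\<gamma> \<in> Nlat \<Longrightarrow> latadd \<gamma> (\<lambda>k. unitv i k - unitv j k) \<in> Nlat"
| subm: "\<gamma> \<in> Nlat \<Longrightarrow> latadd \<gamma> (\<lambda>k. - (unitv i k - unitv j k)) \<in> Nlat"

text \<open>V_N = M(1)_N tensor C[N]; since C tensor N = h, M(1)_N = M(1).\<close>
definition VN :: "vec set" where
  "VN = {v \<in> VL. \<forall>m \<gamma>. v (m, \<gamma>) \<noteq> 0 \<longrightarrow> \<gamma> \<in> Nlat}"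

text \<open>tau = sigma tensor sigma tensor sigma: the (unique) VOA automorphism of V_L fixing the
  vacuum and acting on the generating weight-one vectors of each factor V_{Z a_i} by sigma:
  a(-1) |-> e^a + e^-a, e^a |-> (a(-1) - e^a + e^-a)/2, e^-a |-> (a(-1) + e^a - e^-a)/2.
  Being an automorphism is expressed by Y(g u,z) g = g Y(u,z) for these generators.\<close>
definition is_tau :: "(vec \<Rightarrow> vec) \<Rightarrow> bool" where
  "is_tau t \<longleftrightarrow> bij_betw t VL VL
     \<and> (\<forall>u\<in>VL. \<forall>v\<in>VL. t (vadd u v) = vadd (t u) (t v))
     \<and> (\<forall>c. \<forall>v\<in>VL. t (vscale c v) = vscale c (t v))
     \<and> t vacuum = vacuum
     \<and> (\<forall>i n. \<forall>v\<in>VL.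
          t (heis i n v) = vadd (vop (unitv i) n (t v)) (vop (\<lambda>k. - unitv i k) n (t v))
        \<and> t (vop (unitv i) n v) = vscale (1/2) (vadd (heis i n (t v))
              (vadd (vscale (-1) (vop (unitv i) n (t v))) (vop (\<lambda>k. - unitv i k) n (t v))))
        \<and> t (vop (\<lambda>k. - unitv i k) n v) = vscale (1/2) (vadd (heis i n (t v))
              (vadd (vop (unitv i) n (t v)) (vscale (-1) (vop (\<lambda>k. - unitv i k) n (t v))))))"

end

theory Submission
  imports Defs "HOL-Library.Function_Algebras"
begin

text \<open>Let \<open>\<psi>\<^sub>1\<close> be the automorphism \<open>u \<otimes> e^\<gamma> \<mapsto> (-1)^(\<gamma>\<^sub>1+\<gamma>\<^sub>2+\<gamma>\<^sub>3) u \<otimes> e^\<gamma>\<close> of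
  \<open>V\<^sub>L\<close>. Since \<open>N\<close> consists exactly of the vectors of \<open>L\<close> with even coordinate sum, \<open>V\<^sub>N\<close> is
  the fixed-point space of \<open>\<psi>\<^sub>1\<close>. The key identity is \<open>\<tau> \<psi>\<^sub>1 = \<psi>\<^sub>2 \<tau>\<close>. On the generators,
  \<open>\<psi>\<^sub>1\<close> fixes \<open>\<alpha>\<^sub>i(-1)\<close> and negates \<open>e^(\<plusminus>\<alpha>\<^sub>i)\<close>, while \<open>\<psi>\<^sub>2\<close> negates \<open>\<alpha>\<^sub>i(-1)\<close> and swaps
  \<open>e^\<alpha>\<^sub>i\<close> with \<open>e^(-\<alpha>\<^sub>i)\<close>; \<open>\<sigma>\<close> carries the first pattern to the second. So both sides of the
  identity are linear maps that fix the vacuum and transform the modes of the generators in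
  the same way, and since every basis vector arises from the vacuum by applying such modes,
  they agree. Hence \<open>\<tau>\<close> maps the fixed points of \<open>\<psi>\<^sub>1\<close> onto those of \<open>\<psi>\<^sub>2\<close>.\<close>

section \<open>Finitely supported vectors and linear maps\<close>

lemma sum_fun_apply: "(sum h S) x = (\<Sum>s\<in>S. h s x)"
  by (induct S rule: infinite_finite_induct) auto

lemma vadd_eq_plus: "vadd u v = u + v"
  by (simp add: vadd_def fun_eq_iff)

lemma vadd_commute: "vadd u v = vadd v u"
  by (simp add: vadd_def fun_eq_iff add.commute)

lemma vscale_1 [simp]: "vscale 1 v = v"
  by (simp add: vscale_def)

lemma vscale_vscale: "vscale a (vscale b v) = vscale (a * b) v"
  by (simp add: vscale_def fun_eq_iff)

lemma vscale_sum: "vscale c (sum h S) = (\<Sum>s\<in>S. vscale c (h s))"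
  by (simp add: fun_eq_iff vscale_def sum_fun_apply sum_distrib_left)

lemma vscale_if_zero: "vscale c (if P then v else 0) = (if P then vscale c v else 0)"
  by (simp add: vscale_def fun_eq_iff)

lemma VL_add: "u \<in> VL \<Longrightarrow> v \<in> VL \<Longrightarrow> u + v \<in> VL"
proof -
  assume "u \<in> VL" "v \<in> VL"
  moreover have "supp (u + v) \<subseteq> supp u \<union> supp v" by (auto simp: supp_def)
  ultimately show ?thesis by (auto simp: VL_def intro: finite_subset)
qed

lemma VL_vadd: "u \<in> VL \<Longrightarrow> v \<in> VL \<Longrightarrow> vadd u v \<in> VL"
  by (simp add: vadd_eq_plus VL_add)

lemma VL_vscale: "v \<in> VL \<Longrightarrow> vscale c v \<in> VL"
proof -
  assume "v \<in> VL"
  moreover have "supp (vscale c v) \<subseteq> supp v" by (auto simp: supp_def vscale_def)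
  ultimately show ?thesis by (auto simp: VL_def intro: finite_subset)
qed

lemma VL_zero: "0 \<in> VL"
  by (simp add: VL_def supp_def)

lemma VL_sum: "(\<And>s. s \<in> S \<Longrightarrow> h s \<in> VL) \<Longrightarrow> sum h S \<in> VL"
  by (induct S rule: infinite_finite_induct) (auto simp: VL_zero VL_add)

lemma supp_basis: "supp (basis b) = {b}"
  by (auto simp: supp_def basis_def)

lemma VL_basis: "basis b \<in> VL"
  by (simp add: VL_def supp_basis)

lemma VL_eq_sum_basis:
  assumes "v \<in> VL"
  shows "v = (\<Sum>b\<in>supp v. vscale (v b) (basis b))"
proof
  fix x
  have "(\<Sum>b\<in>supp v. vscale (v b) (basis b)) x = (\<Sum>b\<in>supp v. if b = x then v x else 0)"
    unfolding sum_fun_apply vscale_def basis_def by (rule sum.cong) auto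
  also have "\<dots> = v x" using assms by (auto simp: VL_def supp_def)
  finally show "v x = (\<Sum>b\<in>supp v. vscale (v b) (basis b)) x" by simp
qed

lemma ext_superset:
  assumes "finite S" "supp v \<subseteq> S"
  shows "ext f v x = (\<Sum>b\<in>S. v b * f b x)"
  unfolding ext_def
  by (rule sum.mono_neutral_left) (use assms in \<open>auto simp: supp_def\<close>)

lemma supp_ext: "supp (ext f v) \<subseteq> (\<Union>b\<in>supp v. supp (f b))"
proof
  fix x assume "x \<in> supp (ext f v)"
  then have "(\<Sum>b\<in>supp v. v b * f b x) \<noteq> 0" by (simp add: supp_def ext_def)
  then obtain b where "b \<in> supp v" "v b * f b x \<noteq> 0" by (meson sum.neutral)
  then show "x \<in> (\<Union>b\<in>supp v. supp (f b))" by (auto simp: supp_def simp del: split_paired_Ex)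
qed

lemma ext_VL:
  assumes "v \<in> VL" "\<And>b. f b \<in> VL"
  shows "ext f v \<in> VL"
proof -
  have "finite (\<Union>b\<in>supp v. supp (f b))" using assms by (simp add: VL_def)
  then show ?thesis using supp_ext[of f v] by (simp add: VL_def finite_subset)
qed

lemma ext_vadd:
  assumes "u \<in> VL" "v \<in> VL"
  shows "ext f (vadd u v) = vadd (ext f u) (ext f v)"
proof -
  let ?S = "supp u \<union> supp v"
  have "finite ?S" using assms by (auto simp: VL_def)
  moreover have "supp (vadd u v) \<subseteq> ?S" by (auto simp: supp_def vadd_def)
  ultimately show ?thesis
    by (simp add: fun_eq_iff vadd_def ext_superset[of ?S] distrib_right sum.distrib)
qed

lemma ext_vscale:
  assumes "v \<in> VL"
  shows "ext f (vscale c v) = vscale c (ext f v)"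
proof -
  have "finite (supp v)" using assms by (auto simp: VL_def)
  moreover have "supp (vscale c v) \<subseteq> supp v" by (auto simp: supp_def vscale_def)
  ultimately show ?thesis
    by (simp add: fun_eq_iff vscale_def ext_superset[of "supp v"] sum_distrib_left mult.assoc)
qed

lemma ext_basis: "ext f (basis b) = f b"
  unfolding ext_def supp_basis by (simp add: basis_def)

lemma ext_vscale_basis: "ext f (vscale c (basis b)) = vscale c (f b)"
  by (simp add: ext_vscale VL_basis ext_basis)

lemma ext_vscale_fun: "ext (\<lambda>b. vscale c (f b)) v = vscale c (ext f v)"
  by (simp add: ext_def vscale_def fun_eq_iff sum_distrib_left mult.left_commute)

lemma ext_ext:
  assumes v: "v \<in> VL" and g: "\<And>b. g b \<in> VL"
  shows "ext f (ext g v) = ext (\<lambda>b. ext f (g b)) v"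
proof
  fix x
  let ?S = "supp v"
  let ?T = "\<Union>b\<in>?S. supp (g b)"
  have fT: "finite ?T" using v g by (auto simp: VL_def)
  have "ext f (ext g v) x = (\<Sum>c\<in>?T. ext g v c * f c x)"
    by (rule ext_superset[OF fT supp_ext])
  also have "\<dots> = (\<Sum>b\<in>?S. \<Sum>c\<in>?T. v b * g b c * f c x)"
    by (simp add: ext_def sum_distrib_right sum.swap[where A = ?T])
  also have "\<dots> = (\<Sum>b\<in>?S. v b * ext f (g b) x)"
  proof (rule sum.cong[OF refl])
    fix b assume "b \<in> ?S"
    then have "ext f (g b) x = (\<Sum>c\<in>?T. g b c * f c x)" by (intro ext_superset[OF fT]) auto
    then show "(\<Sum>c\<in>?T. v b * g b c * f c x) = v b * ext f (g b) x"
      by (simp add: sum_distrib_left mult.assoc)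
  qed
  also have "\<dots> = ext (\<lambda>b. ext f (g b)) v x" by (simp add: ext_def)
  finally show "ext f (ext g v) x = ext (\<lambda>b. ext f (g b)) v x" .
qed

lemma ext_intertwine:
  assumes v: "v \<in> VL" and f: "\<And>b. f b \<in> VL" and g: "\<And>b. g b \<in> VL"
    and fg: "\<And>b. ext f (g b) = vscale c (ext g' (f b))"
  shows "ext f (ext g v) = vscale c (ext g' (ext f v))"
proof -
  have "ext f (ext g v) = ext (\<lambda>b. ext f (g b)) v" by (rule ext_ext[OF v g])
  also have "\<dots> = vscale c (ext (\<lambda>b. ext g' (f b)) v)" by (simp add: fg ext_vscale_fun)
  also have "ext (\<lambda>b. ext g' (f b)) v = ext g' (ext f v)" by (rule ext_ext[OF v f, symmetric])
  finally show ?thesis .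
qed

definition linear_VL :: "(vec \<Rightarrow> vec) \<Rightarrow> bool" where
  "linear_VL F \<longleftrightarrow> (\<forall>v\<in>VL. F v \<in> VL) \<and> (\<forall>u\<in>VL. \<forall>v\<in>VL. F (vadd u v) = vadd (F u) (F v))
     \<and> (\<forall>c. \<forall>v\<in>VL. F (vscale c v) = vscale c (F v))"

lemma linear_VL_ext: "(\<And>b. f b \<in> VL) \<Longrightarrow> linear_VL (ext f)"
  by (simp add: linear_VL_def ext_VL ext_vadd ext_vscale)

lemma linear_VL_vscale: "linear_VL (vscale c)"
  unfolding linear_VL_def
  by (intro conjI ballI allI VL_vscale) (simp_all add: vscale_def vadd_def fun_eq_iff algebra_simps)

lemma linear_VL_comp: "linear_VL F \<Longrightarrow> linear_VL G \<Longrightarrow> linear_VL (\<lambda>v. F (G v))"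
  by (simp add: linear_VL_def)

lemma linear_VL_VL: "linear_VL F \<Longrightarrow> v \<in> VL \<Longrightarrow> F v \<in> VL"
  by (simp add: linear_VL_def)

lemma linear_VL_vadd: "linear_VL F \<Longrightarrow> u \<in> VL \<Longrightarrow> v \<in> VL \<Longrightarrow> F (vadd u v) = vadd (F u) (F v)"
  by (simp add: linear_VL_def)

lemma linear_VL_add: "linear_VL F \<Longrightarrow> u \<in> VL \<Longrightarrow> v \<in> VL \<Longrightarrow> F (u + v) = F u + F v"
  by (simp add: linear_VL_vadd flip: vadd_eq_plus)

lemma linear_VL_scale: "linear_VL F \<Longrightarrow> v \<in> VL \<Longrightarrow> F (vscale c v) = vscale c (F v)"
  by (simp add: linear_VL_def)

lemma linear_VL_zero:
  assumes "linear_VL F"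
  shows "F 0 = 0"
proof -
  have "vscale 0 w = 0" for w by (simp add: vscale_def fun_eq_iff)
  then show ?thesis using linear_VL_scale[OF assms VL_zero, of 0] by simp
qed

lemma linear_VL_sum:
  assumes F: "linear_VL F" and h: "\<And>s. s \<in> S \<Longrightarrow> h s \<in> VL"
  shows "F (sum h S) = (\<Sum>s\<in>S. F (h s))"
  using h
proof (induct S rule: infinite_finite_induct)
  case (insert a A)
  have "F (sum h (insert a A)) = F (h a + sum h A)" using insert.hyps by simp
  also have "\<dots> = F (h a) + F (sum h A)"
    using insert.prems by (intro linear_VL_add[OF F]) (auto intro: VL_sum)
  also have "F (sum h A) = (\<Sum>s\<in>A. F (h s))" using insert by simp
  finally show ?case by (simp only: sum.insert[OF insert.hyps(1,2)])
qed (simp_all add: linear_VL_zero[OF F])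

lemma linear_VL_vscale_sum:
  assumes F: "linear_VL F" and X: "\<And>s. s \<in> S \<Longrightarrow> X s \<in> VL"
    and FX: "\<And>s. s \<in> S \<Longrightarrow> F (X s) = Y s"
  shows "F (vscale c (\<Sum>s\<in>S. X s)) = vscale c (\<Sum>s\<in>S. Y s)"
  by (simp add: linear_VL_scale[OF F] linear_VL_sum[OF F] VL_sum X FX)

lemma linear_VL_eqI:
  assumes F: "linear_VL F" and G: "linear_VL G" and FG: "\<And>b. F (basis b) = G (basis b)"
    and v: "v \<in> VL"
  shows "F v = G v"
proof -
  have "F (\<Sum>b\<in>supp v. vscale (v b) (basis b)) = G (\<Sum>b\<in>supp v. vscale (v b) (basis b))"
    by (simp add: linear_VL_sum[OF F] linear_VL_sum[OF G] linear_VL_scale[OF F]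
        linear_VL_scale[OF G] VL_vscale VL_basis FG)
  then show ?thesis using VL_eq_sum_basis[OF v] by simp
qed

section \<open>Heisenberg operators and vertex operators\<close>

lemma heis_b_VL: "heis_b i n b \<in> VL"
  by (auto simp: heis_b_def VL_basis VL_vscale split: prod.split)

lemma linear_VL_heis: "linear_VL (heis i n)"
  unfolding heis_def by (rule linear_VL_ext[OF heis_b_VL])

lemma heis_basis_neg:
  "heis i (- int r - 1) (basis (m, \<gamma>)) = basis (m + Poly_Mapping.single (i, r) 1, \<gamma>)"
  by (simp add: heis_def ext_basis heis_b_def)

lemma heisL_eq: "heisL \<beta> n v = vadd (vadd (vscale (of_int (\<beta> I1)) (heis I1 n v))
   (vscale (of_int (\<beta> I2)) (heis I2 n v))) (vscale (of_int (\<beta> I3)) (heis I3 n v))"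
  by (simp add: heisL_def vadd_def vscale_def)

lemma heisL_VL: "v \<in> VL \<Longrightarrow> heisL \<beta> n v \<in> VL"
  unfolding heisL_eq by (intro VL_vadd VL_vscale linear_VL_VL[OF linear_VL_heis])

lemma heisL_uminus: "heisL (\<lambda>k. - \<beta> k) n v = vscale (-1) (heisL \<beta> n v)"
  by (simp add: heisL_def vscale_def fun_eq_iff algebra_simps)

lemma heisL_intertwine:
  assumes F: "linear_VL F" and H: "\<And>i n w. w \<in> VL \<Longrightarrow> F (heis i n w) = vscale c (heis i n (F w))"
    and w: "w \<in> VL"
  shows "F (heisL \<beta> n w) = vscale c (heisL \<beta> n (F w))"
proof -
  have "\<And>i. heis i n w \<in> VL" using w linear_VL_VL[OF linear_VL_heis] by blast
  then show ?thesis
    unfolding heisL_eq using w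
    by (simp add: linear_VL_vadd[OF F] linear_VL_scale[OF F] VL_vadd VL_vscale H)
       (simp add: vadd_def vscale_def fun_eq_iff algebra_simps)
qed

definition intertwines_heisL :: "(vec \<Rightarrow> vec) \<Rightarrow> lat \<Rightarrow> lat \<Rightarrow> bool" where
  "intertwines_heisL F \<beta> \<beta>' \<longleftrightarrow>
     linear_VL F \<and> (\<forall>n. \<forall>w\<in>VL. F (heisL \<beta> n w) = heisL \<beta>' n (F w))"

lemma intertwines_heisL_vscale: "intertwines_heisL (vscale c) \<beta> \<beta>"
proof -
  have H: "vscale c (heis i n u) = vscale 1 (heis i n (vscale c u))" if "u \<in> VL" for i n u
    using linear_VL_scale[OF linear_VL_heis that] by simp
  show ?thesis
    using heisL_intertwine[OF linear_VL_vscale H]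
    by (simp add: intertwines_heisL_def linear_VL_vscale)
qed

declare Sminus.simps [simp del] Tplus.simps [simp del]

lemma Sminus_0 [simp]: "Sminus \<beta> 0 v = v"
  by (simp add: Sminus.simps)

lemma Tplus_0 [simp]: "Tplus \<beta> 0 v = v"
  by (simp add: Tplus.simps)

lemma Sminus_pos: "k > 0 \<Longrightarrow> Sminus \<beta> k v =
   vscale (1 / of_nat k) (\<Sum>n\<in>{1..k}. heisL \<beta> (- int n) (Sminus \<beta> (k - n) v))"
  by (subst Sminus.simps) (simp add: vscale_def fun_eq_iff sum_fun_apply)

lemma Tplus_pos: "k > 0 \<Longrightarrow> Tplus \<beta> k v =
   vscale (1 / of_nat k) (\<Sum>n\<in>{1..k}. vscale (-1) (heisL \<beta> (int n) (Tplus \<beta> (k - n) v)))"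
  by (subst Tplus.simps) (simp add: vscale_def fun_eq_iff sum_fun_apply)

lemma Sminus_VL: "v \<in> VL \<Longrightarrow> Sminus \<beta> k v \<in> VL"
proof (induct k rule: less_induct)
  case (less k)
  then show ?case
    by (cases "k = 0") (auto simp: Sminus_pos intro!: VL_vscale VL_sum heisL_VL)
qed

lemma Tplus_VL: "v \<in> VL \<Longrightarrow> Tplus \<beta> k v \<in> VL"
proof (induct k rule: less_induct)
  case (less k)
  then show ?case
    by (cases "k = 0") (auto simp: Tplus_pos intro!: VL_vscale VL_sum heisL_VL)
qed

lemma Sminus_intertwine:
  assumes "intertwines_heisL F \<beta> \<beta>'" and w: "w \<in> VL"
  shows "F (Sminus \<beta> k w) = Sminus \<beta>' k (F w)"
proof (induct k rule: less_induct)
  case (less k)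
  have F: "linear_VL F" and H: "\<And>n w. w \<in> VL \<Longrightarrow> F (heisL \<beta> n w) = heisL \<beta>' n (F w)"
    using assms(1) by (simp_all add: intertwines_heisL_def)
  show ?case
  proof (cases "k = 0")
    case False
    have "F (vscale (1 / of_nat k) (\<Sum>n\<in>{1..k}. heisL \<beta> (- int n) (Sminus \<beta> (k - n) w)))
      = vscale (1 / of_nat k) (\<Sum>n\<in>{1..k}. heisL \<beta>' (- int n) (Sminus \<beta>' (k - n) (F w)))"
      using False w by (intro linear_VL_vscale_sum[OF F]) (auto simp: H less Sminus_VL heisL_VL)
    then show ?thesis using False by (simp add: Sminus_pos)
  qed simp
qed

lemma Tplus_intertwine:
  assumes "intertwines_heisL F \<beta> \<beta>'" and w: "w \<in> VL"
  shows "F (Tplus \<beta> k w) = Tplus \<beta>' k (F w)"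
proof (induct k rule: less_induct)
  case (less k)
  have F: "linear_VL F" and H: "\<And>n w. w \<in> VL \<Longrightarrow> F (heisL \<beta> n w) = heisL \<beta>' n (F w)"
    using assms(1) by (simp_all add: intertwines_heisL_def)
  show ?case
  proof (cases "k = 0")
    case False
    have "F (vscale (1 / of_nat k) (\<Sum>n\<in>{1..k}. vscale (-1) (heisL \<beta> (int n) (Tplus \<beta> (k - n) w))))
      = vscale (1 / of_nat k) (\<Sum>n\<in>{1..k}. vscale (-1) (heisL \<beta>' (int n) (Tplus \<beta>' (k - n) (F w))))"
      using False w
      by (intro linear_VL_vscale_sum[OF F])
         (auto simp: H less Tplus_VL heisL_VL VL_vscale linear_VL_scale[OF F])
    then show ?thesis using False by (simp add: Tplus_pos)
  qed simp
qed

lemma vop_b_eq: "vop_b \<beta> n (m, \<gamma>) = (\<Sum>k\<in>{0..wt m}. if 0 \<le> int k - n - 1 - ip \<beta> \<gamma>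
    then Sminus \<beta> (nat (int k - n - 1 - ip \<beta> \<gamma>)) (Tplus \<beta> k (basis (m, latadd \<beta> \<gamma>))) else 0)"
  unfolding vop_b_def by (auto simp: fun_eq_iff sum_fun_apply Let_def intro!: sum.cong)

lemma vop_b_VL: "vop_b \<beta> n b \<in> VL"
  by (cases b) (simp only: vop_b_eq, rule VL_sum, simp add: VL_zero Sminus_VL Tplus_VL VL_basis)

lemma linear_VL_vop: "linear_VL (vop \<beta> n)"
  unfolding vop_def by (rule linear_VL_ext[OF vop_b_VL])

lemma vop_basis_vacuum_mode: "vop \<beta> (- 1 - ip \<beta> \<gamma>) (basis (0, \<gamma>)) = basis (0, latadd \<beta> \<gamma>)"
  by (simp add: vop_def ext_basis vop_b_eq wt_def)

lemma vop_b_intertwine: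
  assumes FH: "intertwines_heisL F \<beta> \<beta>'"
  shows "F (vop_b \<beta> n (m, \<gamma>)) = (\<Sum>k\<in>{0..wt m}. if 0 \<le> int k - n - 1 - ip \<beta> \<gamma>
    then Sminus \<beta>' (nat (int k - n - 1 - ip \<beta> \<gamma>)) (Tplus \<beta>' k (F (basis (m, latadd \<beta> \<gamma>))))
    else 0)"
proof -
  have F: "linear_VL F" using FH by (simp add: intertwines_heisL_def)
  show ?thesis
    unfolding vop_b_eq
    by (subst linear_VL_sum[OF F])
       (auto simp: VL_zero Sminus_VL Tplus_VL VL_basis linear_VL_zero[OF F]
         Sminus_intertwine[OF FH] Tplus_intertwine[OF FH] intro!: sum.cong)
qed

lemma vscale_Sminus_Tplus:
  "u \<in> VL \<Longrightarrow> Sminus \<beta> j (Tplus \<beta> k (vscale c u)) = vscale c (Sminus \<beta> j (Tplus \<beta> k u))"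
  by (simp add: Sminus_intertwine[OF intertwines_heisL_vscale]
      Tplus_intertwine[OF intertwines_heisL_vscale] Tplus_VL)

section \<open>The automorphisms \<open>\<psi>\<^sub>2\<close> and \<open>\<psi>\<^sub>1\<close>\<close>

lemma deg_eq_sum_superset:
  "finite S \<Longrightarrow> Poly_Mapping.keys m \<subseteq> S \<Longrightarrow> deg m = (\<Sum>p\<in>S. Poly_Mapping.lookup m p)"
  unfolding deg_def by (rule sum.mono_neutral_left) (auto simp: in_keys_iff)

lemma deg_add_single: "deg (m + Poly_Mapping.single p 1) = deg m + 1"
proof -
  let ?S = "Poly_Mapping.keys m \<union> {p}"
  have "deg (m + Poly_Mapping.single p 1) = (\<Sum>q\<in>?S. Poly_Mapping.lookup (m + Poly_Mapping.single p 1) q)"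
    using keys_add[of m "Poly_Mapping.single p 1"] by (intro deg_eq_sum_superset) auto
  also have "\<dots> = (\<Sum>q\<in>?S. Poly_Mapping.lookup m q + (if q = p then 1 else 0))"
    by (rule sum.cong) (auto simp: lookup_add lookup_single when_def)
  also have "\<dots> = (\<Sum>q\<in>?S. Poly_Mapping.lookup m q) + 1"
    by (simp add: sum.distrib)
  also have "(\<Sum>q\<in>?S. Poly_Mapping.lookup m q) = deg m"
    by (rule deg_eq_sum_superset[symmetric]) auto
  finally show ?thesis .
qed

lemma single_add_minus_single:
  "Poly_Mapping.lookup (m :: mon) p > 0 \<Longrightarrow> (m - Poly_Mapping.single p 1) + Poly_Mapping.single p 1 = m"
  by (rule poly_mapping_eqI) (auto simp: lookup_add lookup_minus lookup_single when_def)

lemma deg_minus_single: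
  "Poly_Mapping.lookup m p > 0 \<Longrightarrow> deg m = deg (m - Poly_Mapping.single p 1) + 1"
  by (metis single_add_minus_single deg_add_single)

definition psi2_b :: "mon \<times> lat \<Rightarrow> vec" where
  "psi2_b = (\<lambda>(m, \<gamma>). vscale ((-1) ^ deg m) (basis (m, (\<lambda>i. - \<gamma> i))))"

lemma psi2_eq_ext: "psi2 = ext psi2_b"
  by (simp add: psi2_def psi2_b_def)

lemma psi2_b_VL: "psi2_b b \<in> VL"
  by (auto simp: psi2_b_def VL_vscale VL_basis split: prod.split)

lemma linear_VL_psi2: "linear_VL psi2"
  unfolding psi2_eq_ext by (rule linear_VL_ext[OF psi2_b_VL])

lemma psi2_basis: "psi2 (basis (m, \<gamma>)) = vscale ((-1) ^ deg m) (basis (m, (\<lambda>i. - \<gamma> i)))"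
  by (simp add: psi2_eq_ext ext_basis psi2_b_def)

lemma psi2_heis_b: "ext psi2_b (heis_b i n b) = vscale (-1) (ext (heis_b i n) (psi2_b b))"
proof -
  obtain m \<gamma> where b: "b = (m, \<gamma>)" by fastforce
  let ?p = "(i, nat (n - 1))"
  consider "n < 0" | "n = 0" | "n > 0" "Poly_Mapping.lookup m ?p = 0"
    | "n > 0" "Poly_Mapping.lookup m ?p > 0" by linarith
  then show ?thesis
  proof cases
    case 1
    then show ?thesis
      by (simp add: b heis_b_def psi2_b_def ext_basis ext_vscale_basis deg_add_single[simplified])
         (simp add: vscale_def fun_eq_iff)
  next
    case 4
    then have "deg m = deg (m - Poly_Mapping.single ?p 1) + 1"
      by (intro deg_minus_single)
    with 4 show ?thesis
      by (simp add: b heis_b_def psi2_b_def ext_basis ext_vscale_basis)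
         (simp add: vscale_def fun_eq_iff)
  qed (simp_all add: b heis_b_def psi2_b_def ext_basis ext_vscale_basis, simp_all add: vscale_def fun_eq_iff)
qed

lemma psi2_heis: "w \<in> VL \<Longrightarrow> psi2 (heis i n w) = vscale (-1) (heis i n (psi2 w))"
  unfolding psi2_eq_ext heis_def
  by (rule ext_intertwine[OF _ psi2_b_VL heis_b_VL psi2_heis_b])

lemma intertwines_heisL_psi2: "intertwines_heisL psi2 \<beta> (\<lambda>k. - \<beta> k)"
  by (simp add: intertwines_heisL_def linear_VL_psi2 heisL_intertwine[OF linear_VL_psi2 psi2_heis]
      heisL_uminus)

lemma psi2_vop_b: "ext psi2_b (vop_b \<beta> n b) = ext (vop_b (\<lambda>k. - \<beta> k) n) (psi2_b b)"
proof -
  obtain m \<gamma> where b: "b = (m, \<gamma>)" by fastforce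
  have ip: "ip (\<lambda>k. - \<beta> k) (\<lambda>i. - \<gamma> i) = ip \<beta> \<gamma>"
    by (simp add: ip_def)
  have latadd: "latadd (\<lambda>k. - \<beta> k) (\<lambda>i. - \<gamma> i) = (\<lambda>i. - latadd \<beta> \<gamma> i)"
    by (simp add: latadd_def fun_eq_iff)
  have "psi2 (vop_b \<beta> n (m, \<gamma>)) = vscale ((-1) ^ deg m) (vop_b (\<lambda>k. - \<beta> k) n (m, (\<lambda>i. - \<gamma> i)))"
    unfolding vop_b_intertwine[OF intertwines_heisL_psi2]
    unfolding vop_b_eq vscale_sum ip latadd psi2_basis vscale_if_zero
    by (intro sum.cong refl) (simp add: vscale_Sminus_Tplus VL_basis)
  then show ?thesis
    by (simp add: b psi2_eq_ext psi2_b_def ext_vscale_basis)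
qed

lemma psi2_vop:
  assumes "w \<in> VL"
  shows "psi2 (vop \<beta> n w) = vop (\<lambda>k. - \<beta> k) n (psi2 w)"
proof -
  have fg: "ext psi2_b (vop_b \<beta> n b) = vscale 1 (ext (vop_b (\<lambda>k. - \<beta> k) n) (psi2_b b))" for b
    using psi2_vop_b by simp
  show ?thesis
    using ext_intertwine[OF assms psi2_b_VL vop_b_VL fg] by (simp add: psi2_eq_ext vop_def)
qed

definition lat_parity :: "lat \<Rightarrow> complex" where
  "lat_parity \<gamma> = (if even (\<gamma> I1 + \<gamma> I2 + \<gamma> I3) then 1 else -1)"

definition parity_b :: "mon \<times> lat \<Rightarrow> vec" where
  "parity_b = (\<lambda>(m, \<gamma>). vscale (lat_parity \<gamma>) (basis (m, \<gamma>)))"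

definition parity_aut :: "vec \<Rightarrow> vec" where
  "parity_aut = ext parity_b"

lemma parity_b_VL: "parity_b b \<in> VL"
  by (auto simp: parity_b_def VL_vscale VL_basis split: prod.split)

lemma linear_VL_parity_aut: "linear_VL parity_aut"
  unfolding parity_aut_def by (rule linear_VL_ext[OF parity_b_VL])

lemma parity_aut_basis: "parity_aut (basis (m, \<gamma>)) = vscale (lat_parity \<gamma>) (basis (m, \<gamma>))"
  by (simp add: parity_aut_def ext_basis parity_b_def)

lemma parity_aut_apply:
  assumes "v \<in> VL"
  shows "parity_aut v x = lat_parity (snd x) * v x"
proof -
  have "parity_aut v x = (\<Sum>b\<in>supp v. if b = x then lat_parity (snd x) * v x else 0)"
    unfolding parity_aut_def ext_def
    by (rule sum.cong) (auto simp: parity_b_def vscale_def basis_def split: prod.split)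
  also have "\<dots> = lat_parity (snd x) * v x"
    using assms by (simp add: sum.delta VL_def) (simp add: supp_def)
  finally show ?thesis .
qed

lemma lat_parity_add_unitv: "lat_parity (latadd (unitv i) \<gamma>) = - lat_parity \<gamma>"
  by (cases i) (auto simp: lat_parity_def latadd_def unitv_def)

lemma lat_parity_add_uminus_unitv: "lat_parity (latadd (\<lambda>k. - unitv i k) \<gamma>) = - lat_parity \<gamma>"
  by (cases i) (auto simp: lat_parity_def latadd_def unitv_def)

lemma parity_aut_heis:
  assumes "w \<in> VL"
  shows "parity_aut (heis i n w) = heis i n (parity_aut w)"
proof -
  have "ext parity_b (heis_b i n (m, \<gamma>)) = vscale 1 (ext (heis_b i n) (parity_b (m, \<gamma>)))" for m \<gamma>
    by (simp add: heis_b_def parity_b_def ext_basis ext_vscale_basis) (simp add: vscale_def fun_eq_iff)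
  then have fg: "ext parity_b (heis_b i n b) = vscale 1 (ext (heis_b i n) (parity_b b))" for b
    by (cases b) simp
  show ?thesis
    using ext_intertwine[OF assms parity_b_VL heis_b_VL fg] by (simp add: parity_aut_def heis_def)
qed

lemma intertwines_heisL_parity_aut: "intertwines_heisL parity_aut \<beta> \<beta>"
  using heisL_intertwine[OF linear_VL_parity_aut, of 1] parity_aut_heis
  by (simp add: intertwines_heisL_def linear_VL_parity_aut)

lemma parity_aut_vop:
  assumes w: "w \<in> VL" and odd: "\<And>\<gamma>. lat_parity (latadd \<beta> \<gamma>) = - lat_parity \<gamma>"
  shows "parity_aut (vop \<beta> n w) = vscale (-1) (vop \<beta> n (parity_aut w))"
proof -
  have fg: "ext parity_b (vop_b \<beta> n b) = vscale (-1) (ext (vop_b \<beta> n) (parity_b b))" for b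
  proof -
    obtain m \<gamma> where b: "b = (m, \<gamma>)" by fastforce
    have "parity_aut (vop_b \<beta> n (m, \<gamma>)) = vscale (lat_parity (latadd \<beta> \<gamma>)) (vop_b \<beta> n (m, \<gamma>))"
      unfolding vop_b_intertwine[OF intertwines_heisL_parity_aut]
      unfolding vop_b_eq vscale_sum parity_aut_basis vscale_if_zero
      by (intro sum.cong refl) (simp add: vscale_Sminus_Tplus VL_basis)
    then show ?thesis
      by (simp add: b parity_aut_def odd parity_b_def ext_vscale_basis vscale_vscale)
  qed
  show ?thesis
    using ext_intertwine[OF w parity_b_VL vop_b_VL fg] by (simp add: parity_aut_def vop_def)
qed

section \<open>The lattice \<open>N\<close>\<close>

lemma Nlat_even_sum: "\<gamma> \<in> Nlat \<Longrightarrow> even (\<gamma> I1 + \<gamma> I2 + \<gamma> I3)"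
proof (induct rule: Nlat.induct)
  case (addp \<gamma> i j) then show ?case by (cases i; cases j) (auto simp: latadd_def unitv_def)
next
  case (subp \<gamma> i j) then show ?case by (cases i; cases j) (auto simp: latadd_def unitv_def)
next
  case (addm \<gamma> i j) then show ?case by (cases i; cases j) (auto simp: latadd_def unitv_def)
next
  case (subm \<gamma> i j) then show ?case by (cases i; cases j) (auto simp: latadd_def unitv_def)
qed simp

lemma Nlat_add_multiple:
  assumes plus: "\<And>\<gamma>. \<gamma> \<in> Nlat \<Longrightarrow> latadd \<gamma> \<delta> \<in> Nlat"
    and minus: "\<And>\<gamma>. \<gamma> \<in> Nlat \<Longrightarrow> latadd \<gamma> (\<lambda>k. - \<delta> k) \<in> Nlat"
    and "\<gamma> \<in> Nlat"
  shows "latadd \<gamma> (\<lambda>k. c * \<delta> k) \<in> Nlat"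
proof (induct c rule: int_induct[where k = 0])
  case base
  then show ?case using \<open>\<gamma> \<in> Nlat\<close> by (simp add: latadd_def)
next
  case (step1 c)
  have "latadd \<gamma> (\<lambda>k. (c + 1) * \<delta> k) = latadd (latadd \<gamma> (\<lambda>k. c * \<delta> k)) \<delta>"
    by (simp add: latadd_def fun_eq_iff algebra_simps)
  then show ?case using plus[OF step1(2)] by simp
next
  case (step2 c)
  have "latadd \<gamma> (\<lambda>k. (c - 1) * \<delta> k) = latadd (latadd \<gamma> (\<lambda>k. c * \<delta> k)) (\<lambda>k. - \<delta> k)"
    by (simp add: latadd_def fun_eq_iff algebra_simps)
  then show ?case using minus[OF step2(2)] by simp
qed

lemma Nlat_iff_even_sum: "\<gamma> \<in> Nlat \<longleftrightarrow> even (\<gamma> I1 + \<gamma> I2 + \<gamma> I3)"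
proof
  assume "even (\<gamma> I1 + \<gamma> I2 + \<gamma> I3)"
  then obtain h where h: "\<gamma> I1 + \<gamma> I2 + \<gamma> I3 = 2 * h" by blast
  let ?diff = "\<lambda>i j k. unitv i k - unitv j k"
  have diff: "latadd \<gamma>' (\<lambda>k. c * ?diff i j k) \<in> Nlat" if "\<gamma>' \<in> Nlat" for \<gamma>' c i j
    using that by (intro Nlat_add_multiple) (auto intro: Nlat.addm Nlat.subm)
  have double: "latadd \<gamma>' (\<lambda>k. c * latadd (unitv i) (unitv i) k) \<in> Nlat" if "\<gamma>' \<in> Nlat" for \<gamma>' c i
  proof (rule Nlat_add_multiple)
    show "latadd \<gamma>'' (latadd (unitv i) (unitv i)) \<in> Nlat" if "\<gamma>'' \<in> Nlat" for \<gamma>''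
      using that by (rule Nlat.addp)
    show "latadd \<gamma>'' (\<lambda>k. - latadd (unitv i) (unitv i) k) \<in> Nlat" if "\<gamma>'' \<in> Nlat" for \<gamma>''
      unfolding latadd_def[of "unitv i" "unitv i"] using that by (rule Nlat.subp)
  qed (rule that)
  let ?\<gamma> = "latadd (latadd (latadd (\<lambda>_. 0) (\<lambda>k. \<gamma> I1 * ?diff I1 I3 k)) (\<lambda>k. \<gamma> I2 * ?diff I2 I3 k))
    (\<lambda>k. h * latadd (unitv I3) (unitv I3) k)"
  have "?\<gamma> \<in> Nlat" by (intro double diff Nlat.zero)
  moreover have "?\<gamma> = \<gamma>"
  proof
    fix k show "?\<gamma> k = \<gamma> k" using h by (cases k) (auto simp: latadd_def unitv_def)
  qed
  ultimately show "\<gamma> \<in> Nlat" by simp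
qed (rule Nlat_even_sum)

lemma VN_eq_fixed_parity_aut: "VN = {v \<in> VL. parity_aut v = v}"
proof -
  have "parity_aut v = v \<longleftrightarrow> (\<forall>m \<gamma>. v (m, \<gamma>) \<noteq> 0 \<longrightarrow> \<gamma> \<in> Nlat)" if "v \<in> VL" for v
    using that by (auto simp: fun_eq_iff parity_aut_apply lat_parity_def Nlat_iff_even_sum)
  then show ?thesis by (auto simp: VN_def)
qed

section \<open>Generation of \<open>V\<^sub>L\<close> from the vacuum\<close>

lemma basis_zero_induct:
  assumes vac: "P vacuum"
    and up: "\<And>u i n. u \<in> VL \<Longrightarrow> P u \<Longrightarrow> P (vop (unitv i) n u)"
    and down: "\<And>u i n. u \<in> VL \<Longrightarrow> P u \<Longrightarrow> P (vop (\<lambda>k. - unitv i k) n u)"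
  shows "P (basis (0, \<gamma>))"
proof (induct "nat \<bar>\<gamma> I1\<bar> + nat \<bar>\<gamma> I2\<bar> + nat \<bar>\<gamma> I3\<bar>" arbitrary: \<gamma> rule: less_induct)
  case less
  show ?case
  proof (cases "\<exists>i. \<gamma> i \<noteq> 0")
    case False
    then have "\<gamma> = (\<lambda>_. 0)" by auto
    then show ?thesis using vac by (simp add: vacuum_def)
  next
    case True
    then obtain i where i: "\<gamma> i \<noteq> 0" by blast
    define \<beta> where "\<beta> = (if \<gamma> i > 0 then unitv i else (\<lambda>k. - unitv i k))"
    define \<gamma>' where "\<gamma>' = (\<lambda>k. \<gamma> k - \<beta> k)"
    have "nat \<bar>\<gamma>' I1\<bar> + nat \<bar>\<gamma>' I2\<bar> + nat \<bar>\<gamma>' I3\<bar> < nat \<bar>\<gamma> I1\<bar> + nat \<bar>\<gamma> I2\<bar> + nat \<bar>\<gamma> I3\<bar>"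
      using i by (cases i) (auto simp: \<gamma>'_def \<beta>_def unitv_def)
    then have "P (basis (0, \<gamma>'))" by (rule less)
    then have "P (vop \<beta> (- 1 - ip \<beta> \<gamma>') (basis (0, \<gamma>')))"
      using up down VL_basis by (simp add: \<beta>_def)
    moreover have "latadd \<beta> \<gamma>' = \<gamma>" by (simp add: latadd_def \<gamma>'_def)
    ultimately show ?thesis by (simp add: vop_basis_vacuum_mode)
  qed
qed

lemma basis_induct:
  assumes vac: "P vacuum"
    and heis: "\<And>u i n. u \<in> VL \<Longrightarrow> P u \<Longrightarrow> P (heis i n u)"
    and up: "\<And>u i n. u \<in> VL \<Longrightarrow> P u \<Longrightarrow> P (vop (unitv i) n u)"
    and down: "\<And>u i n. u \<in> VL \<Longrightarrow> P u \<Longrightarrow> P (vop (\<lambda>k. - unitv i k) n u)"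
  shows "P (basis b)"
proof -
  obtain m \<gamma> where b: "b = (m, \<gamma>)" by fastforce
  have "P (basis (m, \<gamma>))"
  proof (induct "deg m" arbitrary: m rule: less_induct)
    case less
    show ?case
    proof (cases "m = 0")
      case True
      then show ?thesis using basis_zero_induct[of P, OF vac up down] by simp
    next
      case False
      then obtain p where p: "Poly_Mapping.lookup m p > 0"
        by (metis keys_eq_empty ex_in_conv in_keys_iff gr0I)
      obtain i r where ir: "p = (i, r)" by fastforce
      have m: "m - Poly_Mapping.single p 1 + Poly_Mapping.single p 1 = m"
        by (rule single_add_minus_single[OF p])
      have "P (basis (m - Poly_Mapping.single p 1, \<gamma>))"
        using deg_minus_single[OF p] by (intro less) simp
      then have "P (heis i (- int r - 1) (basis (m - Poly_Mapping.single p 1, \<gamma>)))"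
        by (rule heis[OF VL_basis])
      then show ?thesis unfolding heis_basis_neg ir[symmetric] m .
    qed
  qed
  then show ?thesis by (simp add: b)
qed

section \<open>\<open>\<tau>\<close> conjugates \<open>\<psi>\<^sub>1\<close> into \<open>\<psi>\<^sub>2\<close>\<close>

lemma is_tauD:
  assumes "is_tau \<tau>"
  shows "bij_betw \<tau> VL VL" and "linear_VL \<tau>" and "\<tau> vacuum = vacuum"
    and "v \<in> VL \<Longrightarrow> \<tau> (heis i n v) = vadd (vop (unitv i) n (\<tau> v)) (vop (\<lambda>k. - unitv i k) n (\<tau> v))"
    and "v \<in> VL \<Longrightarrow> \<tau> (vop (unitv i) n v) = vscale (1/2) (vadd (heis i n (\<tau> v))
          (vadd (vscale (-1) (vop (unitv i) n (\<tau> v))) (vop (\<lambda>k. - unitv i k) n (\<tau> v))))"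
    and "v \<in> VL \<Longrightarrow> \<tau> (vop (\<lambda>k. - unitv i k) n v) = vscale (1/2) (vadd (heis i n (\<tau> v))
          (vadd (vop (unitv i) n (\<tau> v)) (vscale (-1) (vop (\<lambda>k. - unitv i k) n (\<tau> v)))))"
  using assms by (auto simp: is_tau_def linear_VL_def bij_betw_def)

context
  fixes \<tau> :: "vec \<Rightarrow> vec"
  assumes tau: "is_tau \<tau>"
begin

lemmas VL_closed = VL_vadd VL_vscale VL_basis linear_VL_VL[OF linear_VL_heis]
  linear_VL_VL[OF linear_VL_vop] linear_VL_VL[OF linear_VL_psi2]
  linear_VL_VL[OF linear_VL_parity_aut] linear_VL_VL[OF is_tauD(2)[OF tau]]

lemma tau_parity_aut_heis:
  assumes u: "u \<in> VL" and IH: "\<tau> (parity_aut u) = psi2 (\<tau> u)"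
  shows "\<tau> (parity_aut (heis i n u)) = psi2 (\<tau> (heis i n u))"
proof -
  let ?X = "psi2 (\<tau> u)"
  have "\<tau> (parity_aut (heis i n u)) = vadd (vop (unitv i) n ?X) (vop (\<lambda>k. - unitv i k) n ?X)"
    using u by (simp add: parity_aut_heis is_tauD(4)[OF tau] IH VL_closed)
  also have "\<dots> = psi2 (\<tau> (heis i n u))"
    using u by (simp add: is_tauD(4)[OF tau] linear_VL_vadd[OF linear_VL_psi2] psi2_vop
        VL_closed vadd_commute)
  finally show ?thesis .
qed

lemma tau_parity_aut_vop_unitv:
  assumes u: "u \<in> VL" and IH: "\<tau> (parity_aut u) = psi2 (\<tau> u)"
  shows "\<tau> (parity_aut (vop (unitv i) n u)) = psi2 (\<tau> (vop (unitv i) n u))"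
proof -
  let ?X = "psi2 (\<tau> u)"
  have "\<tau> (parity_aut (vop (unitv i) n u)) = vscale (-1) (vscale (1/2) (vadd (heis i n ?X)
      (vadd (vscale (-1) (vop (unitv i) n ?X)) (vop (\<lambda>k. - unitv i k) n ?X))))"
    using u by (simp add: parity_aut_vop lat_parity_add_unitv linear_VL_scale[OF is_tauD(2)[OF tau]]
        is_tauD(5)[OF tau] IH VL_closed)
  also have "\<dots> = vscale (1/2) (vadd (vscale (-1) (heis i n ?X))
      (vadd (vscale (-1) (vop (\<lambda>k. - unitv i k) n ?X)) (vop (unitv i) n ?X)))"
    by (simp add: vadd_def vscale_def fun_eq_iff algebra_simps)
  also have "\<dots> = psi2 (\<tau> (vop (unitv i) n u))"
    using u by (simp add: is_tauD(5)[OF tau] linear_VL_vadd[OF linear_VL_psi2]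
        linear_VL_scale[OF linear_VL_psi2] psi2_vop psi2_heis VL_closed)
  finally show ?thesis .
qed

lemma tau_parity_aut_vop_uminus_unitv:
  assumes u: "u \<in> VL" and IH: "\<tau> (parity_aut u) = psi2 (\<tau> u)"
  shows "\<tau> (parity_aut (vop (\<lambda>k. - unitv i k) n u)) = psi2 (\<tau> (vop (\<lambda>k. - unitv i k) n u))"
proof -
  let ?X = "psi2 (\<tau> u)"
  have "\<tau> (parity_aut (vop (\<lambda>k. - unitv i k) n u)) = vscale (-1) (vscale (1/2) (vadd (heis i n ?X)
      (vadd (vop (unitv i) n ?X) (vscale (-1) (vop (\<lambda>k. - unitv i k) n ?X)))))"
    using u by (simp add: parity_aut_vop lat_parity_add_uminus_unitv
        linear_VL_scale[OF is_tauD(2)[OF tau]] is_tauD(6)[OF tau] IH VL_closed)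
  also have "\<dots> = vscale (1/2) (vadd (vscale (-1) (heis i n ?X))
      (vadd (vop (\<lambda>k. - unitv i k) n ?X) (vscale (-1) (vop (unitv i) n ?X))))"
    by (simp add: vadd_def vscale_def fun_eq_iff algebra_simps)
  also have "\<dots> = psi2 (\<tau> (vop (\<lambda>k. - unitv i k) n u))"
    using u by (simp add: is_tauD(6)[OF tau] linear_VL_vadd[OF linear_VL_psi2]
        linear_VL_scale[OF linear_VL_psi2] psi2_vop psi2_heis VL_closed)
  finally show ?thesis .
qed

lemma tau_parity_aut_vacuum: "\<tau> (parity_aut vacuum) = psi2 (\<tau> vacuum)"
  by (simp add: vacuum_def parity_aut_basis psi2_basis lat_parity_def deg_def
      is_tauD(3)[OF tau, unfolded vacuum_def])

lemma tau_parity_aut: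
  assumes "v \<in> VL"
  shows "\<tau> (parity_aut v) = psi2 (\<tau> v)"
proof (rule linear_VL_eqI[where F = "\<lambda>v. \<tau> (parity_aut v)" and G = "\<lambda>v. psi2 (\<tau> v)"])
  show "linear_VL (\<lambda>v. \<tau> (parity_aut v))"
    by (rule linear_VL_comp[OF is_tauD(2)[OF tau] linear_VL_parity_aut])
  show "linear_VL (\<lambda>v. psi2 (\<tau> v))"
    by (rule linear_VL_comp[OF linear_VL_psi2 is_tauD(2)[OF tau]])
  show "\<tau> (parity_aut (basis b)) = psi2 (\<tau> (basis b))" for b
    by (rule basis_induct[where P = "\<lambda>u. \<tau> (parity_aut u) = psi2 (\<tau> u)"])
       (auto simp: tau_parity_aut_vacuum tau_parity_aut_heis tau_parity_aut_vop_unitv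
         tau_parity_aut_vop_uminus_unitv)
qed (rule assms)

end

lemma bij_betw_image_fixed_points:
  assumes bij: "bij_betw f A A" and g: "\<And>x. x \<in> A \<Longrightarrow> g x \<in> A"
    and conj: "\<And>x. x \<in> A \<Longrightarrow> f (g x) = h (f x)"
  shows "f ` {x \<in> A. g x = x} = {y \<in> A. h y = y}"
proof (intro equalityI subsetI)
  fix y assume "y \<in> f ` {x \<in> A. g x = x}"
  then obtain x where x: "x \<in> A" "g x = x" "y = f x" by blast
  then have "h y = y" using conj[OF x(1)] by simp
  then show "y \<in> {y \<in> A. h y = y}" using bij x by (auto simp: bij_betw_def)
next
  fix y assume y: "y \<in> {y \<in> A. h y = y}"
  then obtain x where x: "x \<in> A" "y = f x" using bij by (auto simp: bij_betw_def)
  then have "f (g x) = f x" using conj y by simp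
  then have "g x = x" using bij g x by (auto simp: bij_betw_def inj_on_def)
  then show "y \<in> f ` {x \<in> A. g x = x}" using x by blast
qed

theorem lemma3p2:
  fixes \<tau> :: "vec \<Rightarrow> vec"
  assumes "is_tau \<tau>"
  shows "\<tau> ` VN = VLplus"
  unfolding VN_eq_fixed_parity_aut VLplus_def
  by (rule bij_betw_image_fixed_points[where h = psi2, OF is_tauD(1)[OF assms]
        linear_VL_VL[OF linear_VL_parity_aut] tau_parity_aut[OF assms]])

end
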